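(* Let $A$ (the source) and $B$ (the target) be finite metric graphs, and let $L(A)$ and $L(B)$ denote their perimeters (the sums of all edge lengths). Let $\alpha>0$ and let $m:\alpha A\to B$ be an isometric covering, where $\alpha A$ denotes $A$ with every edge length multiplied by $\alpha$. Let $\mathcal{D}_m$ be the set of edges of $B$ that are doubly covered by $m$, meaning that every point of the edge has at least two preimages under $m$. Then $$\alpha \;\ge\; \frac{L(B)+\sum_{e\in\mathcal{D}_m}\ell(e)}{L(A)},$$ where $\ell(e)$ is the length of $e$. In particular, the optimal scale factor $\mathrm{OPT}$ satisfies this inequality, with $\mathcal{D}_m$ taken for an isometric covering achieving $\mathrm{OPT}$.
   Context: A metric graph is a graph with a positive length assigned to each edge. It is viewed as a metric space: each edge is a segment of its length, glued at the vertices. An isometric covering of a metric space $Y$ by a metric space $X$ is a surjective map $m:X\to Y$ such that, for every path $p$ in $X$, the arc length of $p$ in $X$ equals the arc length of the curve $m(p)$ in $B$, counted with multiplicity. The optimal scale factor $\mathrm{OPT}$ for source $A$ and target $B$ is the minimum $\alpha$ such that $\alpha A$ has an isometric covering onto $B$. *)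

theory Defs
  imports "HOL-Analysis.Analysis" "HOL-Library.Extended_Nonnegative_Real"
begin

text \<open>A finite metric graph: vertex set, edge set, endpoint map (loops and multi-edges
allowed) and positive edge lengths.\<close>

record ('v, 'e) mgraph =
  verts :: "'v set"
  edges :: "'e set"
  ends  :: "'e \<Rightarrow> 'v \<times> 'v"
  len   :: "'e \<Rightarrow> real"

definition finite_mgraph :: "('v, 'e) mgraph \<Rightarrow> bool" where
  "finite_mgraph G \<longleftrightarrow> finite (verts G) \<and> finite (edges G) \<and>
     (\<forall>e\<in>edges G. fst (ends G e) \<in> verts G \<and> snd (ends G e) \<in> verts G \<and> len G e > 0)"

definition scale :: "real \<Rightarrow> ('v, 'e) mgraph \<Rightarrow> ('v, 'e) mgraph" where
  "scale \<alpha> G = G\<lparr>len := (\<lambda>e. \<alpha> * len G e)\<rparr>"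

definition perimeter :: "('v, 'e) mgraph \<Rightarrow> real" where
  "perimeter G = (\<Sum>e\<in>edges G. len G e)"

text \<open>Points of the metric graph: vertices, and interior points (e,t) with 0<t<len e,
t measured from the first endpoint of e.\<close>
type_synonym ('v, 'e) gpoint = "'v + ('e \<times> real)"

definition gpoints :: "('v, 'e) mgraph \<Rightarrow> ('v, 'e) gpoint set" where
  "gpoints G = Inl ` verts G \<union> {Inr (e, t) | e t. e \<in> edges G \<and> 0 < t \<and> t < len G e}"

definition edge_points :: "('v, 'e) mgraph \<Rightarrow> 'e \<Rightarrow> ('v, 'e) gpoint set" where
  "edge_points G e = {Inl (fst (ends G e)), Inl (snd (ends G e))} \<union>
      {Inr (e, t) | t. 0 < t \<and> t < len G e}"

inductive gwalk :: "('v, 'e) mgraph \<Rightarrow> 'v \<Rightarrow> 'v \<Rightarrow> real \<Rightarrow> bool" for G where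
  nil: "u \<in> verts G \<Longrightarrow> gwalk G u u 0"
| step: "gwalk G u w r \<Longrightarrow> e \<in> edges G \<Longrightarrow>
          ends G e = (w, x) \<or> ends G e = (x, w) \<Longrightarrow> gwalk G u x (r + len G e)"

text \<open>Shortest-path distance between vertices (infinite if not connected).\<close>
definition vdist :: "('v, 'e) mgraph \<Rightarrow> 'v \<Rightarrow> 'v \<Rightarrow> ennreal" where
  "vdist G u w = Inf {ennreal r | r. gwalk G u w r}"

definition anchors :: "('v, 'e) mgraph \<Rightarrow> ('v, 'e) gpoint \<Rightarrow> ('v \<times> real) set" where
  "anchors G x = (case x of Inl v \<Rightarrow> {(v, 0)}
     | Inr (e, t) \<Rightarrow> {(fst (ends G e), t), (snd (ends G e), len G e - t)})"

text \<open>Path metric of the metric graph (extended-valued, infinite between components).\<close>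
definition gdist :: "('v, 'e) mgraph \<Rightarrow> ('v, 'e) gpoint \<Rightarrow> ('v, 'e) gpoint \<Rightarrow> ennreal" where
  "gdist G x y = min
     (case (x, y) of (Inr (e, t), Inr (e', s)) \<Rightarrow> if e = e' then ennreal \<bar>t - s\<bar> else \<infinity>
        | _ \<Rightarrow> \<infinity>)
     (Inf {ennreal a + vdist G u w + ennreal b | u a w b.
             (u, a) \<in> anchors G x \<and> (w, b) \<in> anchors G y})"

definition gpath :: "('v, 'e) mgraph \<Rightarrow> (real \<Rightarrow> ('v, 'e) gpoint) \<Rightarrow> bool" where
  "gpath G p \<longleftrightarrow> p ` {0..1} \<subseteq> gpoints G \<and>
     (\<forall>t\<in>{0..1}. \<forall>\<epsilon>>0. \<exists>\<delta>>0. \<forall>s\<in>{0..1}. \<bar>s - t\<bar> < \<delta> \<longrightarrow> gdist G (p s) (p t) < ennreal \<epsilon>)"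

text \<open>Arc length of a curve on [0,1] (supremum over partitions); counts multiplicity.\<close>
definition arclen :: "('v, 'e) mgraph \<Rightarrow> (real \<Rightarrow> ('v, 'e) gpoint) \<Rightarrow> ennreal" where
  "arclen G p = Sup {(\<Sum>i<n. gdist G (p (f i)) (p (f (Suc i)))) | n f.
      f 0 = 0 \<and> f n = 1 \<and> (\<forall>i<n. f i \<le> f (Suc i))}"

definition isometric_covering ::
  "('v, 'e) mgraph \<Rightarrow> ('w, 'f) mgraph \<Rightarrow> (('v, 'e) gpoint \<Rightarrow> ('w, 'f) gpoint) \<Rightarrow> bool" where
  "isometric_covering X Y m \<longleftrightarrow> m ` gpoints X = gpoints Y \<and>
     (\<forall>p. gpath X p \<longrightarrow> arclen X p = arclen Y (m \<circ> p))"

definition doubly_covered ::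
  "('v, 'e) mgraph \<Rightarrow> ('w, 'f) mgraph \<Rightarrow> (('v, 'e) gpoint \<Rightarrow> ('w, 'f) gpoint) \<Rightarrow> 'f set" where
  "doubly_covered X Y m = {e \<in> edges Y. \<forall>y\<in>edge_points Y e.
      \<exists>x1\<in>gpoints X. \<exists>x2\<in>gpoints X. x1 \<noteq> x2 \<and> m x1 = y \<and> m x2 = y}"

end

theory Submission
  imports Defs
begin

(* Parametrize every edge e of the source by [0,1]. Because m preserves arc length, composing
with m gives an arc in B that is Lipschitz with constant alpha * len A e. Cut each arc into pieces
of parameter length 1/N. A piece meeting the band of an edge f of B (the points at distance at
least 2 eta from its ends) stays inside f, and its trace there has length at most
alpha * len A e / N. So the traces, counted with multiplicity, have total length at most
alpha * perimeter A. Every point of f that is not the image of a vertex has one preimage, and two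
if f is doubly covered. Its preimages lie in distinct pieces once N is large. Fatou's lemma then
gives the bound with len B f - 4 eta in place of len B f, and we let eta tend to 0. *)

lemma vdist_le_gwalk: "gwalk G u w r \<Longrightarrow> vdist G u w \<le> ennreal r"
  unfolding vdist_def by (auto intro!: Inf_lower)

lemma vdist_self: "u \<in> verts G \<Longrightarrow> vdist G u u = 0"
  using vdist_le_gwalk[OF gwalk.nil[of u G]] by simp

lemma vdist_edge_le:
  assumes "u \<in> verts G" "e \<in> edges G" "ends G e = (u, w) \<or> ends G e = (w, u)"
  shows "vdist G u w \<le> ennreal (len G e)"
  using vdist_le_gwalk[OF gwalk.step[OF gwalk.nil[OF assms(1)] assms(2,3)]] by simp

lemma gdist_le_anchors:
  "(u, a) \<in> anchors G x \<Longrightarrow> (w, b) \<in> anchors G y \<Longrightarrow> gdist G x y \<le> ennreal a + vdist G u w + ennreal b"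
  unfolding gdist_def by (rule min.coboundedI2, rule Inf_lower) blast

lemma gdist_same_edge_le: "gdist G (Inr (e, t)) (Inr (e, s)) \<le> ennreal \<bar>t - s\<bar>"
  unfolding gdist_def by (simp add: min.coboundedI1)

definition margin :: "('v, 'e) mgraph \<Rightarrow> ('v, 'e) gpoint \<Rightarrow> real" where
  "margin G x = (case x of Inl _ \<Rightarrow> 0 | Inr (e, t) \<Rightarrow> min t (len G e - t))"

lemma margin_le_anchor:
  "x \<in> gpoints G \<Longrightarrow> (u, a) \<in> anchors G x \<Longrightarrow> 0 \<le> margin G x \<and> margin G x \<le> a"
  by (cases x) (auto simp: anchors_def margin_def gpoints_def)

lemma gdist_margin_cases:
  assumes x: "x \<in> gpoints G" and y: "y \<in> gpoints G"
  shows "ennreal (margin G x + margin G y) \<le> gdist G x y \<or>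
    (\<exists>e t s. x = Inr (e, t) \<and> y = Inr (e, s) \<and> gdist G x y = ennreal \<bar>t - s\<bar>)"
proof -
  let ?routes = "Inf {ennreal a + vdist G u w + ennreal b | u a w b.
    (u, a) \<in> anchors G x \<and> (w, b) \<in> anchors G y}"
  have "ennreal (margin G x + margin G y) \<le> ennreal a + vdist G u w + ennreal b"
    if "(u, a) \<in> anchors G x" "(w, b) \<in> anchors G y" for u a w b
  proof -
    have margins: "0 \<le> margin G x" "margin G x \<le> a" "0 \<le> margin G y" "margin G y \<le> b"
      using margin_le_anchor[OF x that(1)] margin_le_anchor[OF y that(2)] by auto
    then have "ennreal (margin G x + margin G y) \<le> ennreal (a + b)"
      by (intro ennreal_leI) simp
    also have "\<dots> = ennreal a + ennreal b"
      using margins by simp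
    also have "\<dots> \<le> ennreal a + vdist G u w + ennreal b"
      by (simp add: add_mono)
    finally show ?thesis .
  qed
  then have routes: "ennreal (margin G x + margin G y) \<le> ?routes"
    by (auto intro!: Inf_greatest)
  show ?thesis
  proof (cases "\<exists>e t s. x = Inr (e, t) \<and> y = Inr (e, s)")
    case True
    then obtain e t s where xy: "x = Inr (e, t)" "y = Inr (e, s)"
      by blast
    have "gdist G x y = min (ennreal \<bar>t - s\<bar>) ?routes"
      unfolding gdist_def xy by simp
    then show ?thesis
      using routes xy by (cases "ennreal \<bar>t - s\<bar> \<le> ?routes") (auto simp: min_def)
  next
    case False
    then have "gdist G x y = ?routes"
      unfolding gdist_def by (auto split: sum.split)
    then show ?thesis
      using routes by simp
  qed
qed

lemma gdist_lt_margin_imp_same_edge: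
  assumes "Inr (f, t) \<in> gpoints G" "y \<in> gpoints G"
    and "gdist G (Inr (f, t)) y < ennreal \<eta>" "\<eta> \<le> margin G (Inr (f, t))"
  shows "\<exists>s. y = Inr (f, s) \<and> \<bar>t - s\<bar> < \<eta>"
proof -
  have "0 \<le> margin G y"
    using assms(2) by (cases y) (auto simp: margin_def gpoints_def)
  then have eta_le: "ennreal \<eta> \<le> ennreal (margin G (Inr (f, t)) + margin G y)"
    using assms(4) by (intro ennreal_leI) simp
  from gdist_margin_cases[OF assms(1,2)] show ?thesis
  proof
    assume "ennreal (margin G (Inr (f, t)) + margin G y) \<le> gdist G (Inr (f, t)) y"
    with eta_le assms(3) show ?thesis
      by (meson leD order.trans)
  next
    assume "\<exists>e t' s. Inr (f, t) = Inr (e, t') \<and> y = Inr (e, s) \<and>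
      gdist G (Inr (f, t)) y = ennreal \<bar>t' - s\<bar>"
    then obtain s where "y = Inr (f, s)" "gdist G (Inr (f, t)) y = ennreal \<bar>t - s\<bar>"
      by auto
    with assms(3) show ?thesis
      by (auto simp: ennreal_less_iff)
  qed
qed

lemma gdist_same_edge_eq:
  assumes "Inr (f, t) \<in> gpoints G" "Inr (f, s) \<in> gpoints G"
    and "\<bar>t - s\<bar> \<le> margin G (Inr (f, t)) + margin G (Inr (f, s))"
  shows "gdist G (Inr (f, t)) (Inr (f, s)) = ennreal \<bar>t - s\<bar>"
proof (rule order.antisym[OF gdist_same_edge_le])
  have "ennreal \<bar>t - s\<bar> \<le> ennreal (margin G (Inr (f, t)) + margin G (Inr (f, s)))"
    using assms(3) by (rule ennreal_leI)
  then show "ennreal \<bar>t - s\<bar> \<le> gdist G (Inr (f, t)) (Inr (f, s))"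
    using gdist_margin_cases[OF assms(1,2)] by auto
qed

definition edge_point :: "('v, 'e) mgraph \<Rightarrow> 'e \<Rightarrow> real \<Rightarrow> ('v, 'e) gpoint" where
  "edge_point G e s = (if s \<le> 0 then Inl (fst (ends G e)) else if 1 \<le> s then Inl (snd (ends G e))
     else Inr (e, len G e * s))"

lemma edge_point_cover:
  assumes "x \<in> gpoints G" "x \<notin> Inl ` verts G"
  shows "\<exists>e\<in>edges G. \<exists>s\<in>{0<..<1}. x = edge_point G e s"
proof -
  obtain e t where x: "x = Inr (e, t)" "e \<in> edges G" "0 < t" "t < len G e"
    using assms unfolding gpoints_def by blast
  then have "x = edge_point G e (t / len G e)" "t / len G e \<in> {0<..<1}"
    by (auto simp: edge_point_def divide_le_eq le_divide_eq)
  then show ?thesis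
    using x(2) by blast
qed

context
  fixes G :: "('v, 'e) mgraph" and e :: 'e
  assumes G: "finite_mgraph G" and e: "e \<in> edges G"
begin

lemma edge_point_in_gpoints: "edge_point G e s \<in> gpoints G"
  using G e by (auto simp: edge_point_def gpoints_def finite_mgraph_def)

lemma gdist_edge_point_le:
  assumes u: "u \<in> {0..1}" and v: "v \<in> {0..1}"
  shows "gdist G (edge_point G e u) (edge_point G e v) \<le> ennreal (len G e * \<bar>u - v\<bar>)"
proof -
  let ?a = "fst (ends G e)" and ?b = "snd (ends G e)" and ?l = "len G e"
  have a: "?a \<in> verts G" and b: "?b \<in> verts G" and l: "?l > 0"
    using G e by (auto simp: finite_mgraph_def)
  have ab: "vdist G ?a ?b \<le> ennreal ?l" and ba: "vdist G ?b ?a \<le> ennreal ?l"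
    using vdist_edge_le[OF a e] vdist_edge_le[OF b e] by auto
  have anchors: "anchors G (Inr (e, t)) = {(?a, t), (?b, ?l - t)}" "anchors G (Inl w) = {(w, 0)}"
    for t w
    by (simp_all add: anchors_def)
  note bound = gdist_le_anchors[where G = G]
  have "u = 0 \<or> u = 1 \<or> u \<in> {0<..<1}" "v = 0 \<or> v = 1 \<or> v \<in> {0<..<1}"
    using u v by auto
  then show ?thesis
  proof (elim disjE)
    assume "u = 0" "v = 0" then show ?thesis
      using bound[of ?a 0 "Inl ?a" ?a 0 "Inl ?a"] vdist_self[OF a] anchors
      by (simp add: edge_point_def)
  next
    assume "u = 0" "v = 1" then show ?thesis
      using bound[of ?a 0 "Inl ?a" ?b 0 "Inl ?b"] ab anchors by (simp add: edge_point_def)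
  next
    assume "u = 0" "v \<in> {0<..<1}" then show ?thesis
      using bound[of ?a 0 "Inl ?a" ?a "?l * v" "Inr (e, ?l * v)"] vdist_self[OF a] anchors l
      by (simp add: edge_point_def)
  next
    assume "u = 1" "v = 0" then show ?thesis
      using bound[of ?b 0 "Inl ?b" ?a 0 "Inl ?a"] ba anchors by (simp add: edge_point_def)
  next
    assume "u = 1" "v = 1" then show ?thesis
      using bound[of ?b 0 "Inl ?b" ?b 0 "Inl ?b"] vdist_self[OF b] anchors
      by (simp add: edge_point_def)
  next
    assume "u = 1" "v \<in> {0<..<1}" then show ?thesis
      using bound[of ?b 0 "Inl ?b" ?b "?l - ?l * v" "Inr (e, ?l * v)"] vdist_self[OF b] anchors l
      by (simp add: edge_point_def algebra_simps)
  next
    assume "u \<in> {0<..<1}" "v = 0" then show ?thesis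
      using bound[of ?a "?l * u" "Inr (e, ?l * u)" ?a 0 "Inl ?a"] vdist_self[OF a] anchors l
      by (simp add: edge_point_def)
  next
    assume "u \<in> {0<..<1}" "v = 1" then show ?thesis
      using bound[of ?b "?l - ?l * u" "Inr (e, ?l * u)" ?b 0 "Inl ?b"] vdist_self[OF b] anchors l
      by (simp add: edge_point_def algebra_simps)
  next
    assume "u \<in> {0<..<1}" "v \<in> {0<..<1}" then show ?thesis
      using gdist_same_edge_le[of G e "?l * u" "?l * v"] l
      by (simp add: edge_point_def abs_mult flip: right_diff_distrib)
  qed
qed

end

lemma gpath_if_lipschitz:
  assumes "p ` {0..1} \<subseteq> gpoints G" "0 \<le> L"
    and lip: "\<And>s t. s \<in> {0..1} \<Longrightarrow> t \<in> {0..1} \<Longrightarrow> gdist G (p s) (p t) \<le> ennreal (L * \<bar>s - t\<bar>)"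
  shows "gpath G p"
  unfolding gpath_def
proof (intro conjI ballI allI impI)
  show "p ` {0..1} \<subseteq> gpoints G"
    by fact
next
  fix t \<epsilon> :: real
  assume t: "t \<in> {0..1}" and \<epsilon>: "\<epsilon> > 0"
  show "\<exists>\<delta>>0. \<forall>s\<in>{0..1}. \<bar>s - t\<bar> < \<delta> \<longrightarrow> gdist G (p s) (p t) < ennreal \<epsilon>"
  proof (intro exI[of _ "\<epsilon> / (L + 1)"] conjI ballI impI)
    show "\<epsilon> / (L + 1) > 0"
      using \<epsilon> \<open>0 \<le> L\<close> by simp
    fix s assume s: "s \<in> {0..1}" and "\<bar>s - t\<bar> < \<epsilon> / (L + 1)"
    then have "L * \<bar>s - t\<bar> < \<epsilon>"
      using \<open>0 \<le> L\<close> \<epsilon> by (simp add: field_simps)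
    then show "gdist G (p s) (p t) < ennreal \<epsilon>"
      using lip[OF s t] \<open>0 \<le> L\<close> by (auto simp: ennreal_less_iff intro: le_less_trans)
  qed
qed

lemma arclen_le_if_lipschitz:
  assumes "0 \<le> L"
    and lip: "\<And>s t. s \<in> {0..1} \<Longrightarrow> t \<in> {0..1} \<Longrightarrow> gdist G (p s) (p t) \<le> ennreal (L * \<bar>s - t\<bar>)"
  shows "arclen G p \<le> ennreal L"
  unfolding arclen_def
proof (rule Sup_least, clarify)
  fix n and f :: "nat \<Rightarrow> real"
  assume f0: "f 0 = 0" and fn: "f n = 1" and mono: "\<forall>i<n. f i \<le> f (Suc i)"
  have chain: "f i \<le> f j" if "i \<le> j" "j \<le> n" for i j
    using that(1)
  proof (induction rule: dec_induct)
    case (step k)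
    with mono that(2) show ?case
      by (meson less_le_trans order_trans)
  qed simp
  have "f i \<in> {0..1}" if "i \<le> n" for i
    using chain[of 0 i] chain[of i n] that f0 fn by simp
  then have "gdist G (p (f i)) (p (f (Suc i))) \<le> ennreal (L * (f (Suc i) - f i))" if "i < n" for i
    using lip[of "f i" "f (Suc i)"] mono that by (simp add: abs_minus_commute)
  then have "(\<Sum>i<n. gdist G (p (f i)) (p (f (Suc i)))) \<le> (\<Sum>i<n. ennreal (L * (f (Suc i) - f i)))"
    by (intro sum_mono) simp
  also have "\<dots> = ennreal (\<Sum>i<n. L * (f (Suc i) - f i))"
    using mono \<open>0 \<le> L\<close> by (intro sum_ennreal) auto
  also have "(\<Sum>i<n. L * (f (Suc i) - f i)) = L"
    by (simp add: sum_distrib_left[symmetric] sum_lessThan_telescope f0 fn)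
  finally show "(\<Sum>i<n. gdist G (p (f i)) (p (f (Suc i)))) \<le> ennreal L" .
qed

lemma gdist_le_arclen: "gdist G (p 0) (p 1) \<le> arclen G p"
  unfolding arclen_def
proof (rule Sup_upper, rule CollectI, intro exI conjI)
  show "gdist G (p 0) (p 1) = (\<Sum>i<1. gdist G (p (of_bool (0 < i))) (p (of_bool (0 < Suc i))))"
    by simp
qed auto

lemma isometric_covering_lipschitz:
  assumes "isometric_covering X Y m" "p ` {0..1} \<subseteq> gpoints X" "0 \<le> L"
    and "\<And>s t. s \<in> {0..1} \<Longrightarrow> t \<in> {0..1} \<Longrightarrow> gdist X (p s) (p t) \<le> ennreal (L * \<bar>s - t\<bar>)"
  shows "gdist Y (m (p 0)) (m (p 1)) \<le> ennreal L"
proof -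
  have "gdist Y (m (p 0)) (m (p 1)) \<le> arclen Y (m \<circ> p)"
    using gdist_le_arclen[of Y "m \<circ> p"] by simp
  also have "\<dots> = arclen X p"
    using assms gpath_if_lipschitz[of p X L] by (simp add: isometric_covering_def)
  also have "\<dots> \<le> ennreal L"
    using assms(3,4) by (rule arclen_le_if_lipschitz)
  finally show ?thesis .
qed

lemma isometric_covering_edge_lipschitz:
  assumes "finite_mgraph X" "e \<in> edges X" "isometric_covering X Y m" "a \<in> {0..1}" "b \<in> {0..1}"
  shows "gdist Y (m (edge_point X e a)) (m (edge_point X e b)) \<le> ennreal (len X e * \<bar>a - b\<bar>)"
proof -
  let ?p = "\<lambda>s. edge_point X e (a + (b - a) * s)"
  have in01: "a + (b - a) * s \<in> {0..1}" if "s \<in> {0..1}" for s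
  proof -
    have "a + (b - a) * s = (1 - s) * a + s * b"
      by (simp add: algebra_simps)
    moreover have "0 \<le> (1 - s) * a" "0 \<le> s * b" "(1 - s) * a \<le> 1 - s" "s * b \<le> s"
      using assms(4,5) that by (auto simp: mult_left_le)
    ultimately show ?thesis
      by auto
  qed
  have "gdist X (?p s) (?p t) \<le> ennreal (len X e * \<bar>a - b\<bar> * \<bar>s - t\<bar>)"
    if "s \<in> {0..1}" "t \<in> {0..1}" for s t
    using gdist_edge_point_le[OF assms(1,2) in01[OF that(1)] in01[OF that(2)]]
    by (simp add: abs_mult mult.assoc abs_minus_commute flip: right_diff_distrib)
  moreover have "0 \<le> len X e * \<bar>a - b\<bar>"
    using assms(1,2) by (simp add: finite_mgraph_def less_imp_le)
  ultimately show ?thesis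
    using isometric_covering_lipschitz[OF assms(3), of ?p] edge_point_in_gpoints[OF assms(1,2)]
    by auto
qed

lemma lipschitz_image_interval:
  fixes g :: "real \<Rightarrow> real"
  assumes lip: "C-lipschitz_on {a..b} g" and "a \<le> b"
  shows "compact (g ` {a..b})" and "emeasure lborel (g ` {a..b}) \<le> ennreal (C * (b - a))"
proof -
  have cont: "continuous_on {a..b} g"
    using lip by (rule lipschitz_on_continuous_on)
  then show "compact (g ` {a..b})"
    by (intro compact_continuous_image compact_Icc)
  obtain c d where cd: "g ` {a..b} = {c..d}" "c \<le> d"
    using continuous_image_closed_interval[OF \<open>a \<le> b\<close> cont] by blast
  then obtain s t where st: "s \<in> {a..b}" "t \<in> {a..b}" "g s = c" "g t = d"
    by (metis atLeastAtMost_iff imageE order_refl)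
  have "d - c \<le> C * dist t s"
    using lipschitz_onD[OF lip st(2,1)] st(3,4) by (simp add: dist_real_def)
  also have "\<dots> \<le> C * (b - a)"
    using st(1,2) lipschitz_on_nonneg[OF lip] by (intro mult_left_mono) (auto simp: dist_real_def)
  finally show "emeasure lborel (g ` {a..b}) \<le> ennreal (C * (b - a))"
    using cd by (simp add: ennreal_leI)
qed

lemma short_lipschitz_arc_in_edge:
  fixes q :: "real \<Rightarrow> ('v, 'e) gpoint"
  assumes arc: "\<And>s. s \<in> {a..b} \<Longrightarrow> q s \<in> gpoints G"
    and lip: "\<And>s s'. s \<in> {a..b} \<Longrightarrow> s' \<in> {a..b} \<Longrightarrow> gdist G (q s) (q s') \<le> ennreal (C * \<bar>s - s'\<bar>)"
    and "0 \<le> C" and short: "C * (b - a) < \<eta>"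
    and s0: "s0 \<in> {a..b}" "q s0 = Inr (f, t0)" and t0: "t0 \<in> {2 * \<eta>..len G f - 2 * \<eta>}"
  obtains g where "C-lipschitz_on {a..b} g" "\<And>s. s \<in> {a..b} \<Longrightarrow> q s = Inr (f, g s)"
proof -
  have "0 \<le> C * (b - a)"
    using s0(1) \<open>0 \<le> C\<close> by simp
  then have "0 < \<eta>"
    using short by linarith
  have "\<exists>t. q s = Inr (f, t) \<and> \<bar>t0 - t\<bar> < \<eta>" if s: "s \<in> {a..b}" for s
  proof (rule gdist_lt_margin_imp_same_edge)
    show "Inr (f, t0) \<in> gpoints G" "q s \<in> gpoints G"
      using arc s0 s by force+
    have "C * \<bar>s0 - s\<bar> \<le> C * (b - a)"
      using s s0(1) \<open>0 \<le> C\<close> by (intro mult_left_mono) auto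
    then have "ennreal (C * \<bar>s0 - s\<bar>) < ennreal \<eta>"
      using short \<open>0 \<le> C\<close> by (subst ennreal_less_iff) auto
    then show "gdist G (Inr (f, t0)) (q s) < ennreal \<eta>"
      using lip[OF s0(1) s] s0(2) by simp
    show "\<eta> \<le> margin G (Inr (f, t0))"
      using t0 \<open>0 < \<eta>\<close> by (simp add: margin_def)
  qed
  then obtain g where g: "\<And>s. s \<in> {a..b} \<Longrightarrow> q s = Inr (f, g s) \<and> \<bar>t0 - g s\<bar> < \<eta>"
    by metis
  have "C-lipschitz_on {a..b} g"
  proof (rule lipschitz_onI)
    fix s s' assume s: "s \<in> {a..b}" and s': "s' \<in> {a..b}"
    \<comment> \<open>both points are within \<open>\<eta>\<close> of \<open>t0\<close>, so each has margin above \<open>\<eta>\<close>,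
      while they are less than \<open>2 * \<eta>\<close> apart\<close>
    have "\<bar>g s - g s'\<bar> \<le> margin G (Inr (f, g s)) + margin G (Inr (f, g s'))"
      using g[OF s] g[OF s'] t0 by (auto simp: margin_def)
    then have "gdist G (q s) (q s') = ennreal \<bar>g s - g s'\<bar>"
      using gdist_same_edge_eq arc[OF s] arc[OF s'] g[OF s] g[OF s'] by metis
    then show "dist (g s) (g s') \<le> C * dist s s'"
      using lip[OF s s'] \<open>0 \<le> C\<close> by (simp add: dist_real_def)
  qed fact
  with g that show thesis
    by blast
qed

lemma short_lipschitz_arc_trace:
  fixes q :: "real \<Rightarrow> ('v, 'e) gpoint" and f :: 'e
  assumes arc: "\<And>s. s \<in> {a..b} \<Longrightarrow> q s \<in> gpoints G"
    and lip: "\<And>s s'. s \<in> {a..b} \<Longrightarrow> s' \<in> {a..b} \<Longrightarrow> gdist G (q s) (q s') \<le> ennreal (C * \<bar>s - s'\<bar>)"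
    and "0 \<le> C" and short: "C * (b - a) < \<eta>" and "a \<le> b"
  defines "T \<equiv> {t \<in> {2 * \<eta>..len G f - 2 * \<eta>}. \<exists>s\<in>{a..b}. q s = Inr (f, t)}"
  shows "T \<in> sets lborel \<and> emeasure lborel T \<le> ennreal (C * (b - a)) \<and>
    (T \<noteq> {} \<longrightarrow> (\<exists>t. q a = Inr (f, t)))"
proof (cases "T = {}")
  case False
  then obtain s0 t0 where "s0 \<in> {a..b}" "q s0 = Inr (f, t0)" "t0 \<in> {2 * \<eta>..len G f - 2 * \<eta>}"
    unfolding T_def by blast
  then obtain g where g: "C-lipschitz_on {a..b} g" "\<And>s. s \<in> {a..b} \<Longrightarrow> q s = Inr (f, g s)"
    using short_lipschitz_arc_in_edge[OF arc lip \<open>0 \<le> C\<close> short] by metis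
  then have T: "T = {2 * \<eta>..len G f - 2 * \<eta>} \<inter> g ` {a..b}"
    unfolding T_def by auto
  have image: "compact (g ` {a..b})" "emeasure lborel (g ` {a..b}) \<le> ennreal (C * (b - a))"
    using lipschitz_image_interval[OF g(1) \<open>a \<le> b\<close>] by auto
  then have "closed T"
    unfolding T by (intro closed_Int closed_atLeastAtMost compact_imp_closed)
  moreover have "emeasure lborel T \<le> emeasure lborel (g ` {a..b})"
    using image(1) unfolding T
    by (intro emeasure_mono) (auto intro: borel_closed compact_imp_closed)
  then have "emeasure lborel T \<le> ennreal (C * (b - a))"
    using image(2) by (rule order.trans)
  ultimately show ?thesis
    using g(2) \<open>a \<le> b\<close> by auto
qed simp

locale lipschitz_arcs =
  fixes G :: "('v, 'f) mgraph" and E :: "'e set" and q :: "'e \<Rightarrow> real \<Rightarrow> ('v, 'f) gpoint"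
    and C :: "'e \<Rightarrow> real"
  assumes finite_arcs: "finite E" and finite_edges: "finite (edges G)"
    and lipschitz_const_nonneg: "e \<in> E \<Longrightarrow> 0 \<le> C e"
    and arc_in_gpoints: "e \<in> E \<Longrightarrow> s \<in> {0..1} \<Longrightarrow> q e s \<in> gpoints G"
    and arc_lipschitz: "e \<in> E \<Longrightarrow> s \<in> {0..1} \<Longrightarrow> s' \<in> {0..1} \<Longrightarrow>
      gdist G (q e s) (q e s') \<le> ennreal (C e * \<bar>s - s'\<bar>)"

locale lipschitz_arcs_band = lipschitz_arcs G E q C
  for G :: "('v, 'f) mgraph" and E :: "'e set" and q :: "'e \<Rightarrow> real \<Rightarrow> ('v, 'f) gpoint"
    and C :: "'e \<Rightarrow> real" +
  fixes \<eta> :: real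
  assumes band_width_pos: "0 < \<eta>"
begin

definition mesh :: "nat \<Rightarrow> nat" where
  "mesh n = n + nat \<lceil>(\<Sum>e\<in>E. C e) / \<eta>\<rceil> + 1"

lemma mesh_pos: "0 < mesh n"
  by (simp add: mesh_def)

lemma arc_piece_short:
  assumes "e \<in> E"
  shows "C e / mesh n < \<eta>"
proof -
  have "C e \<le> (\<Sum>e\<in>E. C e)"
    using assms finite_arcs lipschitz_const_nonneg by (intro member_le_sum) auto
  also have "(\<Sum>e\<in>E. C e) / \<eta> < mesh n"
    unfolding mesh_def by linarith
  then have "(\<Sum>e\<in>E. C e) < mesh n * \<eta>"
    using band_width_pos by (simp add: divide_less_eq)
  finally show ?thesis
    using mesh_pos[of n] by (simp add: divide_less_eq mult.commute)
qed

definition piece :: "nat \<Rightarrow> nat \<Rightarrow> real set" where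
  "piece n k = {real k / mesh n .. real (Suc k) / mesh n}"

definition pieces :: "nat \<Rightarrow> ('e \<times> nat) set" where
  "pieces n = E \<times> {..<mesh n}"

definition band :: "'f \<Rightarrow> real set" where
  "band f = {2 * \<eta> .. len G f - 2 * \<eta>}"

definition trace :: "nat \<Rightarrow> 'e \<times> nat \<Rightarrow> 'f \<Rightarrow> real set" where
  "trace n p f = {t \<in> band f. \<exists>s\<in>piece n (snd p). q (fst p) s = Inr (f, t)}"

lemma trace_properties:
  assumes "p \<in> pieces n"
  shows "trace n p f \<in> sets lborel \<and> emeasure lborel (trace n p f) \<le> ennreal (C (fst p) / mesh n) \<and>
    (trace n p f \<noteq> {} \<longrightarrow> (\<exists>t. q (fst p) (real (snd p) / mesh n) = Inr (f, t)))"
proof -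
  obtain e k where p: "p = (e, k)" "e \<in> E" "k < mesh n"
    using assms by (auto simp: pieces_def)
  let ?a = "real k / mesh n" and ?b = "real (Suc k) / mesh n"
  have N: "0 < real (mesh n)"
    using mesh_pos by simp
  have ab: "0 \<le> ?a" "?a \<le> ?b" "?b \<le> 1" "?b - ?a = 1 / mesh n"
    using p(3) N by (auto simp: divide_right_mono divide_le_eq diff_divide_distrib[symmetric])
  then have in01: "{?a..?b} \<subseteq> {0..1}"
    by auto
  have "C e * (?b - ?a) < \<eta>"
    using arc_piece_short[OF p(2), of n] ab(4) by simp
  from short_lipschitz_arc_trace[of ?a ?b "q e" G "C e" \<eta> f, OF _ _ _ this ab(2)]
  show ?thesis
    using arc_in_gpoints[OF p(2)] arc_lipschitz[OF p(2)] lipschitz_const_nonneg[OF p(2)] in01 ab(4)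
    unfolding trace_def piece_def band_def p by (auto simp: subset_iff)
qed

lemma trace_measurable: "p \<in> pieces n \<Longrightarrow> trace n p f \<in> sets lborel"
  using trace_properties by blast

lemma emeasure_trace_le:
  "p \<in> pieces n \<Longrightarrow> emeasure lborel (trace n p f) \<le> ennreal (C (fst p) / mesh n)"
  using trace_properties by blast

lemma trace_in_one_edge:
  assumes "p \<in> pieces n" "trace n p f \<noteq> {}" "trace n p f' \<noteq> {}"
  shows "f = f'"
  using trace_properties[OF assms(1), of f] trace_properties[OF assms(1), of f'] assms(2,3) by auto

lemma sum_emeasure_trace_le:
  assumes "p \<in> pieces n"
  shows "(\<Sum>f\<in>edges G. emeasure lborel (trace n p f)) \<le> ennreal (C (fst p) / mesh n)"
proof (cases "\<exists>f\<in>edges G. trace n p f \<noteq> {}")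
  case True
  then obtain f0 where f0: "f0 \<in> edges G" "trace n p f0 \<noteq> {}"
    by blast
  have "trace n p f = {}" if "f \<in> edges G - {f0}" for f
    using trace_in_one_edge[OF assms f0(2), of f] that by auto
  then have "(\<Sum>f\<in>edges G. emeasure lborel (trace n p f)) = (\<Sum>f\<in>{f0}. emeasure lborel (trace n p f))"
    using f0(1) finite_edges by (intro sum.mono_neutral_right) auto
  then show ?thesis
    using emeasure_trace_le[OF assms] by simp
qed simp

definition trace_count :: "nat \<Rightarrow> 'f \<Rightarrow> real \<Rightarrow> ennreal" where
  "trace_count n f t = (\<Sum>p\<in>pieces n. indicator (trace n p f) t)"

lemma trace_count_measurable: "trace_count n f \<in> borel_measurable lborel"
  unfolding trace_count_def using trace_measurable by measurable

lemma nn_integral_trace_counts_le: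
  "(\<integral>\<^sup>+t. (\<Sum>f\<in>edges G. trace_count n f t) \<partial>lborel) \<le> ennreal (\<Sum>e\<in>E. C e)"
proof -
  have "(\<integral>\<^sup>+t. (\<Sum>f\<in>edges G. trace_count n f t) \<partial>lborel)
      = (\<Sum>f\<in>edges G. \<Sum>p\<in>pieces n. emeasure lborel (trace n p f))"
    unfolding trace_count_def using trace_measurable by (simp add: nn_integral_sum)
  also have "\<dots> = (\<Sum>p\<in>pieces n. \<Sum>f\<in>edges G. emeasure lborel (trace n p f))"
    by (rule sum.swap)
  also have "\<dots> \<le> (\<Sum>p\<in>pieces n. ennreal (C (fst p) / mesh n))"
    by (intro sum_mono sum_emeasure_trace_le)
  also have "\<dots> = ennreal (\<Sum>p\<in>pieces n. C (fst p) / mesh n)"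
    using lipschitz_const_nonneg by (intro sum_ennreal) (auto simp: pieces_def)
  also have "(\<Sum>p\<in>pieces n. C (fst p) / mesh n) = (\<Sum>e\<in>E. \<Sum>k<mesh n. C e / mesh n)"
    unfolding pieces_def sum.cartesian_product by (simp add: case_prod_unfold)
  also have "\<dots> = (\<Sum>e\<in>E. C e)"
    using mesh_pos[of n] by simp
  finally show ?thesis .
qed

definition piece_index :: "nat \<Rightarrow> real \<Rightarrow> nat" where
  "piece_index n s = nat \<lfloor>s * mesh n\<rfloor>"

lemma piece_index:
  assumes "s \<in> {0..<1}"
  shows "piece_index n s < mesh n" and "s \<in> piece n (piece_index n s)"
proof -
  have N: "0 < real (mesh n)"
    using mesh_pos by simp
  have idx: "real (piece_index n s) = of_int \<lfloor>s * mesh n\<rfloor>"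
    using assms by (simp add: piece_index_def)
  have lo: "real (piece_index n s) \<le> s * mesh n" and hi: "s * mesh n < real (piece_index n s) + 1"
    unfolding idx by linarith+
  have "s * mesh n < mesh n"
    using assms N by simp
  with lo have "real (piece_index n s) < real (mesh n)"
    by linarith
  then show "piece_index n s < mesh n"
    by simp
  show "s \<in> piece n (piece_index n s)"
    using lo hi N by (auto simp: piece_def divide_le_eq le_divide_eq)
qed

lemma eventually_inj_on_piece_index:
  fixes S :: "('e \<times> real) set"
  assumes "finite S" "S \<subseteq> UNIV \<times> {0..}"
  shows "eventually (\<lambda>n. inj_on (\<lambda>(e, s). (e, piece_index n s)) S) sequentially"
proof -
  define idx :: "nat \<Rightarrow> 'e \<times> real \<Rightarrow> 'e \<times> nat"
    where "idx n = (\<lambda>(e, s). (e, piece_index n s))" for n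
  have "eventually (\<lambda>n. x \<noteq> y \<longrightarrow> idx n x \<noteq> idx n y) sequentially" if "x \<in> S" "y \<in> S" for x y
  proof (cases "fst x = fst y \<and> snd x \<noteq> snd y")
    case True
    then have "0 < \<bar>snd x - snd y\<bar>" "0 \<le> snd x" "0 \<le> snd y"
      using that assms(2) by auto
    have "eventually (\<lambda>n. 1 / \<bar>snd x - snd y\<bar> < real n) sequentially"
      using eventually_gt_at_top[of "nat \<lceil>1 / \<bar>snd x - snd y\<bar>\<rceil>"] by (rule eventually_mono) linarith
    then show ?thesis
    proof eventually_elim
      case (elim n)
      then have "1 < real n * \<bar>snd x - snd y\<bar>"
        using \<open>0 < \<bar>snd x - snd y\<bar>\<close> by (simp add: divide_less_eq)
      also have "\<dots> \<le> real (mesh n) * \<bar>snd x - snd y\<bar>"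
        by (intro mult_right_mono) (simp_all add: mesh_def)
      finally have "1 < \<bar>snd x * mesh n - snd y * mesh n\<bar>"
        by (simp add: abs_mult mult.commute flip: left_diff_distrib)
      then have "\<lfloor>snd x * mesh n\<rfloor> \<noteq> \<lfloor>snd y * mesh n\<rfloor>"
        by linarith
      then show ?case
        using \<open>0 \<le> snd x\<close> \<open>0 \<le> snd y\<close>
        by (simp add: idx_def piece_index_def case_prod_unfold nat_eq_iff2)
    qed
  next
    case False
    then show ?thesis
      by (auto simp: idx_def case_prod_unfold prod_eq_iff)
  qed
  then have "eventually (\<lambda>n. \<forall>x\<in>S. \<forall>y\<in>S. x \<noteq> y \<longrightarrow> idx n x \<noteq> idx n y) sequentially"
    using assms(1) by (intro eventually_ball_finite ballI) auto
  then show ?thesis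
    unfolding inj_on_def idx_def by (rule eventually_mono) blast
qed

lemma trace_count_eventually_ge:
  assumes "t \<in> band f" "finite S" and S: "S \<subseteq> {(e, s). e \<in> E \<and> s \<in> {0<..<1} \<and> q e s = Inr (f, t)}"
  shows "eventually (\<lambda>n. of_nat (card S) \<le> trace_count n f t) sequentially"
proof -
  have "S \<subseteq> UNIV \<times> {0..}"
    using S by auto
  from eventually_inj_on_piece_index[OF assms(2) this] show ?thesis
  proof eventually_elim
    case (elim n)
    let ?idx = "\<lambda>(e, s). (e, piece_index n s)"
    have "?idx x \<in> pieces n \<and> t \<in> trace n (?idx x) f" if "x \<in> S" for x
    proof -
      have x: "fst x \<in> E" "snd x \<in> {0<..<1}" "q (fst x) (snd x) = Inr (f, t)"
        using S that by auto
      then show ?thesis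
        using assms(1) piece_index[of "snd x" n]
        by (auto simp: pieces_def trace_def case_prod_unfold)
    qed
    then have sub: "?idx ` S \<subseteq> pieces n" and hit: "\<And>p. p \<in> ?idx ` S \<Longrightarrow> t \<in> trace n p f"
      by auto
    have "of_nat (card S) = of_nat (card (?idx ` S))"
      using elim by (simp add: card_image)
    also have "\<dots> = (\<Sum>p\<in>?idx ` S. indicator (trace n p f) t :: ennreal)"
      using hit by simp
    also have "\<dots> \<le> trace_count n f t"
      unfolding trace_count_def using sub finite_arcs
      by (intro sum_mono2) (auto simp: pieces_def)
    finally show ?case .
  qed
qed

context
  fixes k :: "'f \<Rightarrow> nat" and Exc :: "'f \<Rightarrow> real set"
  assumes null: "\<And>f. f \<in> edges G \<Longrightarrow> Exc f \<in> null_sets lborel"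
    and preimages: "\<And>f t. f \<in> edges G \<Longrightarrow> t \<in> {0<..<len G f} - Exc f \<Longrightarrow>
      \<exists>S. finite S \<and> k f \<le> card S \<and> S \<subseteq> {(e, s). e \<in> E \<and> s \<in> {0<..<1} \<and> q e s = Inr (f, t)}"
begin

lemma trace_count_eventually_ge_multiplicity:
  assumes f: "f \<in> edges G"
  shows "eventually (\<lambda>n. of_nat (k f) * indicator (band f - Exc f) t \<le> trace_count n f t)
    sequentially"
proof (cases "t \<in> band f - Exc f")
  case True
  then have "t \<in> {0<..<len G f} - Exc f"
    using band_width_pos by (auto simp: band_def)
  then obtain S where S: "finite S" "k f \<le> card S"
    "S \<subseteq> {(e, s). e \<in> E \<and> s \<in> {0<..<1} \<and> q e s = Inr (f, t)}"
    using preimages[OF f] by meson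
  have "t \<in> band f"
    using True by simp
  from trace_count_eventually_ge[OF this S(1,3)] show ?thesis
  proof (rule eventually_mono)
    fix n
    assume "of_nat (card S) \<le> trace_count n f t"
    moreover have "of_nat (k f) * indicator (band f - Exc f) t \<le> (of_nat (card S) :: ennreal)"
      using True S(2) by simp
    ultimately show "of_nat (k f) * indicator (band f - Exc f) t \<le> trace_count n f t"
      by (rule order.trans[rotated])
  qed
qed simp

lemma liminf_trace_count_ge:
  "(\<Sum>f\<in>edges G. of_nat (k f) * indicator (band f - Exc f) t)
    \<le> liminf (\<lambda>n. \<Sum>f\<in>edges G. trace_count n f t)"
proof (rule Liminf_bounded)
  have "eventually (\<lambda>n. \<forall>f\<in>edges G. of_nat (k f) * indicator (band f - Exc f) t \<le> trace_count n f t)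
      sequentially"
    using finite_edges trace_count_eventually_ge_multiplicity by (intro eventually_ball_finite) auto
  then show "eventually (\<lambda>n. (\<Sum>f\<in>edges G. of_nat (k f) * indicator (band f - Exc f) t)
      \<le> (\<Sum>f\<in>edges G. trace_count n f t)) sequentially"
    by (rule eventually_mono) (rule sum_mono, blast)
qed

lemma nn_integral_multiplicity_indicator:
  "(\<integral>\<^sup>+t. (\<Sum>f\<in>edges G. of_nat (k f) * indicator (band f - Exc f) t) \<partial>lborel)
    = ennreal (\<Sum>f\<in>edges G. k f * max 0 (len G f - 4 * \<eta>))"
proof -
  have measurable: "band f - Exc f \<in> sets lborel" if "f \<in> edges G" for f
    using null_setsD2[OF null[OF that]] by (simp add: band_def sets.Diff)
  have "emeasure lborel (band f - Exc f) = ennreal (max 0 (len G f - 4 * \<eta>))" if "f \<in> edges G" for f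
    using null[OF that]
    by (simp add: emeasure_Diff_null_set band_def emeasure_lborel_Icc_eq max_def)
  then have "(\<integral>\<^sup>+t. (\<Sum>f\<in>edges G. of_nat (k f) * indicator (band f - Exc f) t) \<partial>lborel)
      = (\<Sum>f\<in>edges G. ennreal (k f * max 0 (len G f - 4 * \<eta>)))"
    using measurable
    by (simp add: nn_integral_sum nn_integral_cmult_indicator ennreal_mult
      ennreal_of_nat_eq_real_of_nat)
  also have "\<dots> = ennreal (\<Sum>f\<in>edges G. k f * max 0 (len G f - 4 * \<eta>))"
    by (intro sum_ennreal) simp
  finally show ?thesis .
qed

lemma length_with_multiplicity_band_le:
  "(\<Sum>f\<in>edges G. k f * (len G f - 4 * \<eta>)) \<le> (\<Sum>e\<in>E. C e)"
proof -
  have "ennreal (\<Sum>f\<in>edges G. k f * max 0 (len G f - 4 * \<eta>))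
      = (\<integral>\<^sup>+t. (\<Sum>f\<in>edges G. of_nat (k f) * indicator (band f - Exc f) t) \<partial>lborel)"
    by (rule nn_integral_multiplicity_indicator[symmetric])
  also have "\<dots> \<le> (\<integral>\<^sup>+t. liminf (\<lambda>n. \<Sum>f\<in>edges G. trace_count n f t) \<partial>lborel)"
    by (intro nn_integral_mono liminf_trace_count_ge)
  also have "\<dots> \<le> liminf (\<lambda>n. \<integral>\<^sup>+t. (\<Sum>f\<in>edges G. trace_count n f t) \<partial>lborel)"
    using trace_count_measurable by (intro nn_integral_liminf borel_measurable_sum)
  also have "\<dots> \<le> ennreal (\<Sum>e\<in>E. C e)"
    by (intro Liminf_le always_eventually allI nn_integral_trace_counts_le) simp
  finally have "(\<Sum>f\<in>edges G. k f * max 0 (len G f - 4 * \<eta>)) \<le> (\<Sum>e\<in>E. C e)"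
    using lipschitz_const_nonneg by (simp add: sum_nonneg)
  moreover have "(\<Sum>f\<in>edges G. k f * (len G f - 4 * \<eta>))
      \<le> (\<Sum>f\<in>edges G. k f * max 0 (len G f - 4 * \<eta>))"
    by (intro sum_mono mult_left_mono) auto
  ultimately show ?thesis
    by linarith
qed

end

end

theorem (in lipschitz_arcs) length_with_multiplicity_le:
  fixes k :: "'f \<Rightarrow> nat" and Exc :: "'f \<Rightarrow> real set"
  assumes null: "\<And>f. f \<in> edges G \<Longrightarrow> Exc f \<in> null_sets lborel"
    and preimages: "\<And>f t. f \<in> edges G \<Longrightarrow> t \<in> {0<..<len G f} - Exc f \<Longrightarrow>
      \<exists>S. finite S \<and> k f \<le> card S \<and> S \<subseteq> {(e, s). e \<in> E \<and> s \<in> {0<..<1} \<and> q e s = Inr (f, t)}"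
  shows "(\<Sum>f\<in>edges G. k f * len G f) \<le> (\<Sum>e\<in>E. C e)"
proof (rule field_le_epsilon)
  fix \<epsilon> :: real
  assume "0 < \<epsilon>"
  define K where "K = (\<Sum>f\<in>edges G. real (k f))"
  define \<eta> where "\<eta> = \<epsilon> / (4 * K + 1)"
  have "0 \<le> K"
    by (simp add: K_def sum_nonneg)
  then have "0 < \<eta>" "4 * \<eta> * K \<le> \<epsilon>"
    using \<open>0 < \<epsilon>\<close> by (auto simp: \<eta>_def field_simps)
  interpret lipschitz_arcs_band G E q C \<eta>
    by unfold_locales (fact \<open>0 < \<eta>\<close>)
  have band_bound: "(\<Sum>f\<in>edges G. k f * (len G f - 4 * \<eta>)) \<le> (\<Sum>e\<in>E. C e)"
    using null preimages by (rule length_with_multiplicity_band_le)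
  have "(\<Sum>f\<in>edges G. k f * len G f)
      = (\<Sum>f\<in>edges G. k f * (len G f - 4 * \<eta>) + 4 * \<eta> * k f)"
    by (intro sum.cong) (simp_all add: algebra_simps)
  also have "\<dots> = (\<Sum>f\<in>edges G. k f * (len G f - 4 * \<eta>)) + 4 * \<eta> * K"
    by (simp add: K_def sum.distrib sum_distrib_left)
  finally show "(\<Sum>f\<in>edges G. k f * len G f) \<le> (\<Sum>e\<in>E. C e) + \<epsilon>"
    using band_bound \<open>4 * \<eta> * K \<le> \<epsilon>\<close> by linarith
qed

lemma finite_mgraph_scale: "finite_mgraph G \<Longrightarrow> 0 < \<alpha> \<Longrightarrow> finite_mgraph (scale \<alpha> G)"
  by (simp add: finite_mgraph_def scale_def)

lemma perimeter_scale: "perimeter (scale \<alpha> G) = \<alpha> * perimeter G"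
  by (simp add: perimeter_def scale_def sum_distrib_left)

lemma null_sets_vertex_images:
  assumes "finite_mgraph X"
  shows "{t. Inr (f, t) \<in> m ` Inl ` verts X} \<in> null_sets lborel"
proof (rule finite_imp_null_set_lborel)
  have "finite (m ` Inl ` verts X)"
    using assms by (simp add: finite_mgraph_def)
  then show "finite {t. Inr (f, t) \<in> m ` Inl ` verts X}"
    using finite_vimageI[of "m ` Inl ` verts X" "\<lambda>t. Inr (f, t)"]
    by (simp add: inj_on_def vimage_def)
qed

lemma isometric_covering_preimages:
  assumes X: "finite_mgraph X" and cov: "isometric_covering X Y m"
    and f: "f \<in> edges Y" and t: "t \<in> {0<..<len Y f}"
    and not_vertex_image: "Inr (f, t) \<notin> m ` Inl ` verts X"
  shows "\<exists>S. finite S \<and> (if f \<in> doubly_covered X Y m then 2 else 1) \<le> card S \<and>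
    S \<subseteq> {(e, s). e \<in> edges X \<and> s \<in> {0<..<1} \<and> m (edge_point X e s) = Inr (f, t)}"
    (is "\<exists>S. _ \<and> _ \<and> S \<subseteq> ?P")
proof -
  have param: "\<exists>p\<in>?P. x = edge_point X (fst p) (snd p)"
    if x: "x \<in> gpoints X" "m x = Inr (f, t)" for x
  proof -
    have "x \<notin> Inl ` verts X"
      using x(2) not_vertex_image imageI[of x "Inl ` verts X" m] by auto
    then obtain e s where "e \<in> edges X" "s \<in> {0<..<1}" "x = edge_point X e s"
      using edge_point_cover[OF x(1)] by blast
    with x(2) show ?thesis
      by (intro bexI[of _ "(e, s)"]) auto
  qed
  show ?thesis
  proof (cases "f \<in> doubly_covered X Y m")
    case True
    have "Inr (f, t) \<in> edge_points Y f"
      using t by (simp add: edge_points_def)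
    then obtain x1 x2 where x: "x1 \<in> gpoints X" "x2 \<in> gpoints X" "x1 \<noteq> x2"
      "m x1 = Inr (f, t)" "m x2 = Inr (f, t)"
      using True unfolding doubly_covered_def by blast
    obtain p1 p2 where p: "p1 \<in> ?P" "p2 \<in> ?P"
      and "x1 = edge_point X (fst p1) (snd p1)" "x2 = edge_point X (fst p2) (snd p2)"
      using param[OF x(1,4)] param[OF x(2,5)] by blast
    with x(3) have "p1 \<noteq> p2"
      by auto
    with p have "finite {p1, p2} \<and> 2 \<le> card {p1, p2} \<and> {p1, p2} \<subseteq> ?P"
      by simp
    then show ?thesis
      using True exI[of _ "{p1, p2}"] by simp
  next
    case False
    have "Inr (f, t) \<in> gpoints Y"
      using f t by (simp add: gpoints_def)
    then have "Inr (f, t) \<in> m ` gpoints X"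
      using cov by (simp add: isometric_covering_def)
    then obtain x where "x \<in> gpoints X" "m x = Inr (f, t)"
      by (metis imageE)
    then obtain p where "p \<in> ?P"
      using param by meson
    then have "finite {p} \<and> 1 \<le> card {p} \<and> {p} \<subseteq> ?P"
      by simp
    then show ?thesis
      using False exI[of _ "{p}"] by simp
  qed
qed

lemma isometric_covering_perimeter_bound:
  assumes X: "finite_mgraph X" and Y: "finite_mgraph Y" and cov: "isometric_covering X Y m"
  shows "perimeter Y + (\<Sum>f\<in>doubly_covered X Y m. len Y f) \<le> perimeter X"
proof -
  define k where "k f = (if f \<in> doubly_covered X Y m then 2 else 1 :: nat)" for f
  interpret lipschitz_arcs Y "edges X" "\<lambda>e s. m (edge_point X e s)" "len X"
  proof
    show "finite (edges X)" "finite (edges Y)"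
      using X Y by (simp_all add: finite_mgraph_def)
    show "0 \<le> len X e" if "e \<in> edges X" for e
      using X that by (simp add: finite_mgraph_def less_imp_le)
    show "m (edge_point X e s) \<in> gpoints Y" if "e \<in> edges X" for e s
      using edge_point_in_gpoints[OF X that] cov by (auto simp: isometric_covering_def)
    show "gdist Y (m (edge_point X e s)) (m (edge_point X e s')) \<le> ennreal (len X e * \<bar>s - s'\<bar>)"
      if "e \<in> edges X" "s \<in> {0..1}" "s' \<in> {0..1}" for e s s'
      using isometric_covering_edge_lipschitz[OF X that(1) cov that(2,3)] .
  qed
  have bound: "(\<Sum>f\<in>edges Y. k f * len Y f) \<le> (\<Sum>e\<in>edges X. len X e)"
    using null_sets_vertex_images[OF X] isometric_covering_preimages[OF X cov]
    by (intro length_with_multiplicity_le[where Exc = "\<lambda>f. {t. Inr (f, t) \<in> m ` Inl ` verts X}"])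
      (auto simp: k_def)
  have "doubly_covered X Y m \<subseteq> edges Y"
    by (auto simp: doubly_covered_def)
  moreover have "(\<Sum>f\<in>edges Y. k f * len Y f)
      = (\<Sum>f\<in>edges Y. len Y f + (if f \<in> doubly_covered X Y m then len Y f else 0))"
    by (intro sum.cong) (auto simp: k_def)
  ultimately have "(\<Sum>f\<in>edges Y. k f * len Y f) = perimeter Y + (\<Sum>f\<in>doubly_covered X Y m. len Y f)"
    using Y
    by (simp add: sum.distrib perimeter_def finite_mgraph_def Int_absorb1 flip: sum.inter_restrict)
  with bound show ?thesis
    by (simp add: perimeter_def)
qed

theorem theorem1:
  fixes A :: "('va, 'ea) mgraph" and B :: "('vb, 'eb) mgraph"
    and \<alpha> :: real and m :: "('va, 'ea) gpoint \<Rightarrow> ('vb, 'eb) gpoint"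
  assumes "finite_mgraph A" and "finite_mgraph B" and "\<alpha> > 0"
    and "isometric_covering (scale \<alpha> A) B m"
  shows "\<alpha> \<ge> (perimeter B + (\<Sum>e\<in>doubly_covered (scale \<alpha> A) B m. len B e)) / perimeter A"
proof -
  have "perimeter B + (\<Sum>e\<in>doubly_covered (scale \<alpha> A) B m. len B e) \<le> \<alpha> * perimeter A"
    using isometric_covering_perimeter_bound[OF finite_mgraph_scale[OF assms(1,3)] assms(2,4)]
    by (simp add: perimeter_scale)
  moreover have "0 \<le> perimeter A"
    using assms(1) by (auto simp: perimeter_def finite_mgraph_def intro: sum_nonneg less_imp_le)
  ultimately show ?thesis
    using assms(3) by (cases "perimeter A = 0") (auto simp: divide_le_eq mult.commute)
qed

end
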